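(* There exist $A_0>1$ and $C_0>0$ such that for every $A\ge A_0$ and every $\xi\in H^1(\mathbb R,\mathbb C)\cap L^2_c$, with $w=\zeta_A\xi$, $$\|w'\|_{L^2}^2-|w(0)|^2\ \ge\ -\frac{C_0}{A^2}\big(\|w'\|_{L^2}^2+|w(0)|^2\big).$$
   Context: $\varphi(x)=2^{-1/2}e^{-|x|/2}$ and $L^2_c=\{u\in L^2(\mathbb R,\mathbb C):\int u\varphi\,dx=0\}$ (the continuous spectral subspace of $H_1=-\partial_x^2-\delta$; note $\|w'\|^2-|w(0)|^2$ is the quadratic form of $H_1$). $\chi:\mathbb R\to[0,1]$ is a fixed even smooth function with $\chi=1$ on $[-1,1]$, $\chi=0$ outside $[-2,2]$, $\chi'\le0$ on $(0,\infty)$. For $A>0$: $\zeta_A(x)=\exp\big(-\frac{|x|}{A}(1-\chi(x))\big)$. *)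

theory Defs
  imports "HOL-Analysis.Analysis"
begin

text \<open>Ground state of \<open>H_1 = -d^2/dx^2 - delta\<close>.\<close>
definition phi :: "real \<Rightarrow> real" where
  "phi x = exp (- \<bar>x\<bar> / 2) / sqrt 2"

definition smooth_fun :: "(real \<Rightarrow> real) \<Rightarrow> bool" where
  "smooth_fun f \<longleftrightarrow> (\<forall>n x. ((deriv ^^ n) f) differentiable (at x))"

definition cutoff :: "(real \<Rightarrow> real) \<Rightarrow> bool" where
  "cutoff ch \<longleftrightarrow> smooth_fun ch \<and> (\<forall>x. ch (-x) = ch x) \<and> (\<forall>x. 0 \<le> ch x \<and> ch x \<le> 1)
     \<and> (\<forall>x. \<bar>x\<bar> \<le> 1 \<longrightarrow> ch x = 1) \<and> (\<forall>x. \<bar>x\<bar> > 2 \<longrightarrow> ch x = 0)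
     \<and> (\<forall>x>0. deriv ch x \<le> 0)"

definition zeta :: "(real \<Rightarrow> real) \<Rightarrow> real \<Rightarrow> real \<Rightarrow> real" where
  "zeta ch A x = exp (- (\<bar>x\<bar> / A) * (1 - ch x))"

definition L2 :: "(real \<Rightarrow> complex) \<Rightarrow> bool" where
  "L2 f \<longleftrightarrow> f \<in> borel_measurable lborel \<and> integrable lborel (\<lambda>x. (cmod (f x))\<^sup>2)"

definition L2_norm_sq :: "(real \<Rightarrow> complex) \<Rightarrow> real" where
  "L2_norm_sq f = (LINT x|lborel. (cmod (f x))\<^sup>2)"

text \<open>\<open>H1_deriv u g\<close>: \<open>u \<in> H^1(R,C)\<close> (continuous representative, i.e. absolutely continuous)
  with weak derivative \<open>g \<in> L^2\<close>: \<open>u y - u x = \<integral>_x^y g\<close>.\<close>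
definition H1_deriv :: "(real \<Rightarrow> complex) \<Rightarrow> (real \<Rightarrow> complex) \<Rightarrow> bool" where
  "H1_deriv u g \<longleftrightarrow> L2 u \<and> L2 g \<and>
     (\<forall>x y. x \<le> y \<longrightarrow> u y - u x = (LINT t:{x..y}|lborel. g t))"

definition H1 :: "(real \<Rightarrow> complex) \<Rightarrow> bool" where
  "H1 u \<longleftrightarrow> (\<exists>g. H1_deriv u g)"

definition L2c :: "(real \<Rightarrow> complex) \<Rightarrow> bool" where
  "L2c u \<longleftrightarrow> L2 u \<and> (LINT x|lborel. u x * complex_of_real (phi x)) = 0"

end

theory Submission
  imports Defs
begin

text \<open>
  Since \<open>\<zeta>\<^sub>A > 0\<close> and \<open>\<xi>\<close> is orthogonal to \<open>\<phi>\<close>, the function \<open>w = \<zeta>\<^sub>A \<xi>\<close> is orthogonal to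
  \<open>\<psi> = \<phi> / \<zeta>\<^sub>A\<close>, and \<open>\<phi> \<le> \<psi> \<le> exp (-b |x|) / sqrt 2\<close> with \<open>b = 1/2 - 1/A\<close>.
  Orthogonality gives \<open>w(0) \<integral>\<psi> = \<integral>(w(0) - w) \<psi>\<close>, and Cauchy-Schwarz on each half-line gives
  \<open>|w(x) - w(0)|\<^sup>2 \<le> |x| P\<^sub>\<plusminus>\<close>, where \<open>P\<^sub>+ + P\<^sub>- = \<parallel>w'\<parallel>\<^sup>2\<close> split the norm of \<open>w'\<close> between the
  two half-lines. Integrating against \<open>exp (-b |x|)\<close> (a Gamma integral) and using
  \<open>\<integral>\<psi> \<ge> \<integral>\<phi> = 2 sqrt 2\<close> yields \<open>|w(0)|\<^sup>2 \<le> \<pi> / (32 b\<^sup>3) \<parallel>w'\<parallel>\<^sup>2 \<le> \<parallel>w'\<parallel>\<^sup>2\<close> once \<open>A \<ge> 100\<close>.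
  So the quadratic form of \<open>H\<^sub>1\<close> is even nonnegative at \<open>w\<close>, and any \<open>C\<^sub>0 > 0\<close> works.
\<close>

lemma integral_Cauchy_Schwarz_nonneg:
  fixes f g :: "'a \<Rightarrow> real"
  assumes [measurable]: "f \<in> borel_measurable M" "g \<in> borel_measurable M"
    and nonneg: "\<And>x. 0 \<le> f x" "\<And>x. 0 \<le> g x"
    and f2: "integrable M (\<lambda>x. (f x)\<^sup>2)" and g2: "integrable M (\<lambda>x. (g x)\<^sup>2)"
  shows "integrable M (\<lambda>x. f x * g x)"
    and "(\<integral>x. f x * g x \<partial>M)\<^sup>2 \<le> (\<integral>x. (f x)\<^sup>2 \<partial>M) * (\<integral>x. (g x)\<^sup>2 \<partial>M)"
proof -
  have "norm (f x * g x) \<le> norm ((f x)\<^sup>2 + (g x)\<^sup>2)" for x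
  proof -
    have "0 \<le> f x * g x" using nonneg by simp
    with sum_squares_bound[of "f x" "g x"] show ?thesis by (simp add: mult.assoc)
  qed
  then show fg: "integrable M (\<lambda>x. f x * g x)"
    by (intro Bochner_Integration.integrable_bound[OF Bochner_Integration.integrable_add[OF f2 g2]]) auto
  have "ennreal ((\<integral>x. f x * g x \<partial>M)\<^sup>2) = (\<integral>\<^sup>+x. ennreal (f x) * ennreal (g x) \<partial>M)\<^sup>2"
    using nn_integral_eq_integral[OF fg] nonneg
    by (simp add: ennreal_mult ennreal_power integral_nonneg_AE)
  also have "\<dots> \<le> (\<integral>\<^sup>+x. ennreal (f x) ^ 2 \<partial>M) * (\<integral>\<^sup>+x. ennreal (g x) ^ 2 \<partial>M)"
    by (rule Cauchy_Schwarz_nn_integral) auto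
  also have "\<dots> = ennreal ((\<integral>x. (f x)\<^sup>2 \<partial>M) * (\<integral>x. (g x)\<^sup>2 \<partial>M))"
    using nn_integral_eq_integral[OF f2] nn_integral_eq_integral[OF g2]
    by (simp add: nonneg ennreal_power ennreal_mult integral_nonneg_AE)
  finally show "(\<integral>x. f x * g x \<partial>M)\<^sup>2 \<le> (\<integral>x. (f x)\<^sup>2 \<partial>M) * (\<integral>x. (g x)\<^sup>2 \<partial>M)"
    by (simp add: integral_nonneg_AE)
qed

lemma L2_interval_integral_bound:
  fixes g :: "real \<Rightarrow> complex"
  assumes g: "L2 g" and ab: "a \<le> b" and sub: "{a..b} \<subseteq> S" and S: "S \<in> sets lborel"
  shows "cmod (LINT t:{a..b}|lborel. g t) \<le> sqrt ((b - a) * (LINT t:S|lborel. (cmod (g t))\<^sup>2))"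
proof -
  have [measurable]: "g \<in> borel_measurable lborel" and g2: "integrable lborel (\<lambda>x. (cmod (g x))\<^sup>2)"
    using g by (auto simp: L2_def)
  define f where "f x = indicator {a..b} x * cmod (g x)" for x :: real
  have f2: "(f x)\<^sup>2 = indicator {a..b} x * (cmod (g x))\<^sup>2" for x
    by (simp add: f_def indicator_def)
  have ind2: "(indicator {a..b} x :: real)\<^sup>2 = indicator {a..b} x" for x
    by (simp add: indicator_def)
  have f2i: "integrable lborel (\<lambda>x. (f x)\<^sup>2)"
    unfolding f2 using integrable_mult_indicator[OF _ g2, of "{a..b}"] by simp
  have indi: "integrable lborel (\<lambda>x. (indicator {a..b} x :: real)\<^sup>2)"
    unfolding ind2 using ab by (simp add: integrable_indicator_iff)
  have f_ind: "f x * indicator {a..b} x = f x" for x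
    by (simp add: f_def indicator_def)
  have fm: "f \<in> borel_measurable lborel"
    unfolding f_def by measurable
  have f0: "0 \<le> f x" for x
    by (simp add: f_def)
  note CS = integral_Cauchy_Schwarz_nonneg[OF fm _ f0 _ f2i indi, unfolded f_ind ind2]
  have fi: "integrable lborel f"
    using CS by simp
  have "(LINT x|lborel. f x)\<^sup>2 \<le> (LINT x|lborel. (f x)\<^sup>2) * (b - a)"
    using CS ab by simp
  also have "\<dots> \<le> (LINT t:S|lborel. (cmod (g t))\<^sup>2) * (b - a)"
    unfolding f2 set_lebesgue_integral_def using ab
    by (intro mult_right_mono integral_mono[OF _ integrable_mult_indicator[OF S g2]])
      (use f2i sub in \<open>auto simp: f2 indicator_def\<close>)
  finally have "(LINT x|lborel. f x)\<^sup>2 \<le> (b - a) * (LINT t:S|lborel. (cmod (g t))\<^sup>2)"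
    by (simp only: mult.commute)
  moreover have "set_integrable lborel {a..b} g"
    unfolding set_integrable_def
    by (rule Bochner_Integration.integrable_bound[OF fi]) (auto simp: f_def indicator_def)
  then have "cmod (LINT t:{a..b}|lborel. g t) \<le> (LINT x|lborel. f x)"
    using set_integral_norm_bound by (force simp: f_def set_lebesgue_integral_def)
  ultimately show ?thesis
    by (meson order_trans real_le_rsqrt)
qed

lemma H1_deriv_increment_bound:
  assumes "H1_deriv w g" and "x \<le> y" and "{x..y} \<subseteq> S" and "S \<in> sets lborel"
  shows "cmod (w y - w x) \<le> sqrt ((y - x) * (LINT t:S|lborel. (cmod (g t))\<^sup>2))"
  using assms L2_interval_integral_bound[of g x y S] by (simp add: H1_deriv_def)

lemma L2_norm_sq_split:
  assumes "L2 g"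
  shows "(LINT t:{a..}|lborel. (cmod (g t))\<^sup>2) + (LINT t:{..a}|lborel. (cmod (g t))\<^sup>2) = L2_norm_sq g"
proof -
  have [measurable]: "g \<in> borel_measurable lborel" and gi: "integrable lborel (\<lambda>x. (cmod (g x))\<^sup>2)"
    using assms by (auto simp: L2_def)
  have "(LINT t:{a..}|lborel. (cmod (g t))\<^sup>2) + (LINT t:{..a}|lborel. (cmod (g t))\<^sup>2)
      = (LINT x|lborel. indicator {a..} x * (cmod (g x))\<^sup>2 + indicator {..a} x * (cmod (g x))\<^sup>2)"
    using integrable_mult_indicator[OF _ gi, of "{a..}"] integrable_mult_indicator[OF _ gi, of "{..a}"]
    by (simp add: set_lebesgue_integral_def)
  also have "\<dots> = (LINT x|lborel. (cmod (g x))\<^sup>2)"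
    by (rule integral_cong_AE)
      (auto intro!: AE_mp[OF AE_lborel_singleton[of a] AE_I2] simp: indicator_def)
  finally show ?thesis
    by (simp add: L2_norm_sq_def)
qed

lemma phi_nonneg: "0 \<le> phi x"
  by (simp add: phi_def)

definition gamma_kernel :: "real \<Rightarrow> real \<Rightarrow> real \<Rightarrow> real" where
  "gamma_kernel s b x = indicator {0<..} x * (x powr (s - 1) * exp (- b * x))"

lemma gamma_kernel_integral:
  assumes s: "s > 0" and b: "b > 0"
  shows "integrable lborel (gamma_kernel s b)"
    and "(LINT x|lborel. gamma_kernel s b x) = Gamma s / b powr s"
proof -
  define g where "g t = indicator {0<..} t * (t powr (s - 1) / exp t)" for t :: real
  have "((\<lambda>t. t powr (s - 1) / exp t) has_integral Gamma s) {0..}"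
    by (rule Gamma_integral_real) (rule s)
  then have "((\<lambda>t. if t \<in> {0<..} then t powr (s - 1) / exp t else 0) has_integral Gamma s) {0..}"
    by (rule has_integral_spike [of "{0}", rotated 2]) auto
  then have "((\<lambda>t. t powr (s - 1) / exp t) has_integral Gamma s) {0<..}"
    by (subst (asm) has_integral_restrict) auto
  then have "((\<lambda>t. if t \<in> {0<..} then t powr (s - 1) / exp t else 0) has_integral Gamma s) UNIV"
    by (subst has_integral_restrict_UNIV)
  moreover have "g = (\<lambda>t. if t \<in> {0<..} then t powr (s - 1) / exp t else 0)"
    by (auto simp: g_def fun_eq_iff)
  ultimately have gi: "(g has_integral Gamma s) UNIV"
    by simp
  have gm: "g \<in> borel_measurable borel"
    unfolding g_def by measurable
  have gn: "0 \<le> g x" for x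
    by (simp add: g_def)
  have gint: "integrable lborel g"
    by (rule integrableI_nn_integral_finite[OF _ _ nn_integral_has_integral_lborel[OF gm gn gi]])
      (use gm gn in auto)
  have gval: "integral\<^sup>L lborel g = Gamma s"
    using has_integral_unique[OF has_integral_integral_lborel[OF gint] gi] .
  have scale: "g (0 + b * x) = b powr (s - 1) * gamma_kernel s b x" for x
    using b by (auto simp: g_def gamma_kernel_def indicator_def powr_mult exp_minus field_simps zero_less_mult_iff)
  have "integrable lborel (\<lambda>x. b powr (s - 1) * gamma_kernel s b x)"
    using gint lborel_integrable_real_affine_iff[of b g 0] b by (simp only: scale)
  then show "integrable lborel (gamma_kernel s b)"
    using b by simp
  have "Gamma s = b * (LINT x|lborel. g (0 + b * x))"
    using lborel_integral_real_affine[of b g 0] b gval by simp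
  also have "\<dots> = b * b powr (s - 1) * (LINT x|lborel. gamma_kernel s b x)"
    by (simp only: scale integral_mult_right_zero mult.assoc)
  also have "b * b powr (s - 1) = b powr s"
    using b by (simp add: powr_diff)
  finally show "(LINT x|lborel. gamma_kernel s b x) = Gamma s / b powr s"
    using b by (simp add: field_simps)
qed

lemma gamma_kernel_two_sided_integral:
  assumes "s > 0" and "b > 0"
  shows "integrable lborel (\<lambda>x. p * gamma_kernel s b x + q * gamma_kernel s b (- x))"
    and "(LINT x|lborel. p * gamma_kernel s b x + q * gamma_kernel s b (- x)) = (p + q) * Gamma s / b powr s"
proof -
  note k = gamma_kernel_integral[OF assms]
  have r: "integrable lborel (\<lambda>x. gamma_kernel s b (- x))"
    "(LINT x|lborel. gamma_kernel s b (- x)) = Gamma s / b powr s"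
    using lborel_integrable_real_affine_iff[of "-1" "gamma_kernel s b" 0]
      lborel_integral_real_affine[of "-1" "gamma_kernel s b" 0] k by simp_all
  show "integrable lborel (\<lambda>x. p * gamma_kernel s b x + q * gamma_kernel s b (- x))"
    using k r by simp
  show "(LINT x|lborel. p * gamma_kernel s b x + q * gamma_kernel s b (- x)) = (p + q) * Gamma s / b powr s"
    using k r by (simp add: add_divide_distrib distrib_right)
qed

lemma gamma_kernel_one_two_sided:
  "gamma_kernel 1 c x + gamma_kernel 1 c (- x) \<le> exp (- c * \<bar>x\<bar>)"
  "x \<noteq> 0 \<Longrightarrow> gamma_kernel 1 c x + gamma_kernel 1 c (- x) = exp (- c * \<bar>x\<bar>)"
  by (auto simp: gamma_kernel_def indicator_def)

lemma exp_abs_weight_integrable_mass: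
  fixes \<psi> :: "real \<Rightarrow> real"
  assumes [measurable]: "\<psi> \<in> borel_measurable borel"
    and lo: "\<And>x. phi x \<le> \<psi> x" and hi: "\<And>x. \<psi> x \<le> exp (- b * \<bar>x\<bar>) / sqrt 2" and b: "b > 0"
  shows "integrable lborel \<psi>" and "2 * sqrt 2 \<le> (LINT x|lborel. \<psi> x)"
proof -
  define k where "k c x = (gamma_kernel 1 c x + gamma_kernel 1 c (- x)) / sqrt 2" for c x
  have ki: "integrable lborel (k c)" and kv: "(LINT x|lborel. k c x) = 2 / (c * sqrt 2)" if "c > 0" for c
    using gamma_kernel_two_sided_integral[of 1 c "1 / sqrt 2" "1 / sqrt 2"] that
    by (simp_all add: k_def[abs_def] add_divide_distrib)
  have phi_k: "k (1/2) x \<le> phi x" for x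
    using gamma_kernel_one_two_sided(1)[of "1/2" x] by (simp add: k_def phi_def divide_right_mono)
  have "AE x in lborel. norm (\<psi> x) \<le> norm (k b x)"
  proof (rule AE_mp[OF AE_lborel_singleton[of 0]], intro AE_I2 impI)
    fix x :: real
    assume "x \<noteq> 0"
    then have "k b x = exp (- b * \<bar>x\<bar>) / sqrt 2"
      by (simp add: k_def gamma_kernel_one_two_sided(2))
    moreover have "0 \<le> \<psi> x"
      using order_trans[OF phi_nonneg lo] .
    ultimately show "norm (\<psi> x) \<le> norm (k b x)"
      using hi[of x] by simp
  qed
  then show psi_i: "integrable lborel \<psi>"
    by (intro Bochner_Integration.integrable_bound[OF ki[OF b]]) auto
  have "2 * sqrt 2 = (LINT x|lborel. k (1/2) x)"
    by (simp add: kv field_simps)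
  also have "\<dots> \<le> (LINT x|lborel. \<psi> x)"
    using phi_k lo by (intro integral_mono[OF ki psi_i]) (auto intro: order_trans)
  finally show "2 * sqrt 2 \<le> (LINT x|lborel. \<psi> x)" .
qed

lemma H1_deriv_increment_gamma_kernel_bound:
  fixes w g :: "real \<Rightarrow> complex" and y :: real
  assumes H: "H1_deriv w g" and x: "x \<noteq> 0"
    and y: "0 \<le> y" "y \<le> exp (- b * \<bar>x\<bar>) / sqrt 2"
  defines "Pp \<equiv> LINT t:{0..}|lborel. (cmod (g t))\<^sup>2"
    and "Pm \<equiv> LINT t:{..0}|lborel. (cmod (g t))\<^sup>2"
  shows "cmod ((w x - w 0) * complex_of_real y)
           \<le> sqrt Pp / sqrt 2 * gamma_kernel (3/2) b x + sqrt Pm / sqrt 2 * gamma_kernel (3/2) b (- x)"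
proof -
  have Pp0: "0 \<le> Pp" and Pm0: "0 \<le> Pm"
    unfolding Pp_def Pm_def set_lebesgue_integral_def by (auto intro!: integral_nonneg_AE)
  have kernel: "gamma_kernel (3/2) b t = sqrt t * exp (- b * t)" if "t > 0" for t
    using that by (simp add: gamma_kernel_def powr_half_sqrt)
  show ?thesis
  proof (cases "x > 0")
    case True
    have "cmod ((w x - w 0) * complex_of_real y) \<le> sqrt (x * Pp) * (exp (- b * \<bar>x\<bar>) / sqrt 2)"
      unfolding norm_mult norm_of_real
      using H1_deriv_increment_bound[OF H, of 0 x "{0..}"] True y
      by (intro mult_mono) (auto simp: Pp_def [symmetric] Pp0)
    also have "\<dots> = sqrt Pp / sqrt 2 * gamma_kernel (3/2) b x + sqrt Pm / sqrt 2 * gamma_kernel (3/2) b (- x)"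
      using True kernel[OF True] by (simp add: gamma_kernel_def real_sqrt_mult)
    finally show ?thesis .
  next
    case False
    then have x': "- x > 0"
      using x by simp
    have "cmod ((w x - w 0) * complex_of_real y) \<le> sqrt ((- x) * Pm) * (exp (- b * \<bar>x\<bar>) / sqrt 2)"
      unfolding norm_mult norm_of_real norm_minus_commute[of "w x"]
      using H1_deriv_increment_bound[OF H, of x 0 "{..0}"] x' y
      by (intro mult_mono) (auto simp: Pm_def [symmetric] Pm0 mult_nonpos_nonneg)
    also have "\<dots> = sqrt Pp / sqrt 2 * gamma_kernel (3/2) b x + sqrt Pm / sqrt 2 * gamma_kernel (3/2) b (- x)"
      using x' kernel[OF x'] real_sqrt_mult[of "- x" Pm]
      by (simp add: gamma_kernel_def mult.commute)
    finally show ?thesis .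
  qed
qed

lemma H1_deriv_weighted_increment_bound:
  fixes w g :: "real \<Rightarrow> complex" and \<psi> :: "real \<Rightarrow> real"
  assumes H: "H1_deriv w g" and [measurable]: "\<psi> \<in> borel_measurable borel"
    and psi0: "\<And>x. 0 \<le> \<psi> x" and hi: "\<And>x. \<psi> x \<le> exp (- b * \<bar>x\<bar>) / sqrt 2" and b: "b > 0"
  defines "Pp \<equiv> LINT t:{0..}|lborel. (cmod (g t))\<^sup>2"
    and "Pm \<equiv> LINT t:{..0}|lborel. (cmod (g t))\<^sup>2"
  shows "integrable lborel (\<lambda>x. (w x - w 0) * complex_of_real (\<psi> x))"
    and "cmod (LINT x|lborel. (w x - w 0) * complex_of_real (\<psi> x))
           \<le> (sqrt Pp + sqrt Pm) / sqrt 2 * Gamma (3/2) / b powr (3/2)"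
proof -
  have [measurable]: "w \<in> borel_measurable lborel"
    using H by (simp add: H1_deriv_def L2_def)
  define G where "G x = sqrt Pp / sqrt 2 * gamma_kernel (3/2) b x + sqrt Pm / sqrt 2 * gamma_kernel (3/2) b (- x)"
    for x
  have Gi: "integrable lborel G"
    and Gv: "(LINT x|lborel. G x) = (sqrt Pp + sqrt Pm) / sqrt 2 * Gamma (3/2) / b powr (3/2)"
    using gamma_kernel_two_sided_integral[of "3/2" b "sqrt Pp / sqrt 2" "sqrt Pm / sqrt 2"] b
    by (simp_all add: G_def[abs_def] add_divide_distrib)
  have bound: "AE x in lborel. cmod ((w x - w 0) * complex_of_real (\<psi> x)) \<le> G x"
    using H1_deriv_increment_gamma_kernel_bound[OF H _ psi0 hi]
    by (intro AE_mp[OF AE_lborel_singleton[of 0] AE_I2]) (auto simp: G_def Pp_def Pm_def)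
  show Fi: "integrable lborel (\<lambda>x. (w x - w 0) * complex_of_real (\<psi> x))"
  proof (rule Bochner_Integration.integrable_bound[OF Gi])
    show "AE x in lborel. norm ((w x - w 0) * complex_of_real (\<psi> x)) \<le> norm (G x)"
      using bound by eventually_elim (simp add: order_trans[OF _ abs_ge_self])
  qed simp
  have "cmod (LINT x|lborel. (w x - w 0) * complex_of_real (\<psi> x))
      \<le> (LINT x|lborel. cmod ((w x - w 0) * complex_of_real (\<psi> x)))"
    by (rule integral_norm_bound)
  also have "\<dots> \<le> (LINT x|lborel. G x)"
    by (rule integral_mono_AE[OF _ Gi bound]) (use Fi in simp)
  finally show "cmod (LINT x|lborel. (w x - w 0) * complex_of_real (\<psi> x))
      \<le> (sqrt Pp + sqrt Pm) / sqrt 2 * Gamma (3/2) / b powr (3/2)"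
    by (simp add: Gv)
qed

lemma Gamma_three_halves: "Gamma (3/2 :: real) = sqrt pi / 2"
proof -
  have "(1/2::real) \<notin> \<int>\<^sub>\<le>\<^sub>0"
    by (auto elim!: nonpos_Ints_cases)
  then have "Gamma (1/2 + 1 :: real) = 1/2 * Gamma (1/2)"
    by (rule Gamma_plus1)
  then show ?thesis
    by (simp add: Gamma_one_half_real)
qed

lemma Gamma_three_halves_estimate:
  fixes b u P Q :: real
  assumes b: "49/100 \<le> b" and "0 \<le> u" "0 \<le> P" "0 \<le> Q"
    and u: "u * (2 * sqrt 2) \<le> (sqrt P + sqrt Q) / sqrt 2 * Gamma (3/2) / b powr (3/2)"
  shows "u\<^sup>2 \<le> P + Q"
proof -
  define K where "K = Gamma (3/2) / b powr (3/2)"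
  define S where "S = sqrt P + sqrt Q"
  have K2: "K\<^sup>2 \<le> 8"
  proof -
    have "b powr (3/2) = b * sqrt b"
      using powr_add[of b 1 "1/2"] b by (simp add: powr_half_sqrt)
    then have "K\<^sup>2 = pi / (4 * b ^ 3)"
      using b by (simp add: K_def Gamma_three_halves power_divide power_mult_distrib power3_eq_cube
          power2_eq_square [of "sqrt b"]) (simp add: power2_eq_square)
    moreover have "(49/100) ^ 3 \<le> b ^ 3"
      using b by (intro power_mono) auto
    moreover have "(49/100) ^ 3 = (117649/1000000 :: real)"
      by (simp add: power3_eq_cube)
    moreover have "pi \<le> 16/5"
      using pi_approx(2) by simp
    ultimately show ?thesis
      using b by (simp add: divide_le_eq)
  qed
  have S2: "S\<^sup>2 \<le> 2 * (P + Q)"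
    using sum_squares_bound[of "sqrt P" "sqrt Q"] assms by (simp add: S_def power2_eq_square algebra_simps)
  have "u * (2 * sqrt 2) \<le> S * K / sqrt 2"
    using u by (simp add: K_def S_def mult.commute)
  then have "u * (2 * (sqrt 2 * sqrt 2)) \<le> S * K"
    by (simp add: le_divide_eq mult.assoc)
  then have "(u * 4)\<^sup>2 \<le> (S * K)\<^sup>2"
    using \<open>0 \<le> u\<close> by (intro power_mono) auto
  also have "\<dots> = S\<^sup>2 * K\<^sup>2"
    by (simp add: power_mult_distrib)
  also have "\<dots> \<le> 2 * (P + Q) * 8"
    using S2 K2 assms by (intro mult_mono) auto
  finally show ?thesis
    by (simp add: power_mult_distrib)
qed

lemma H1_deriv_value_at_zero_sq_le:
  fixes w g :: "real \<Rightarrow> complex" and \<psi> :: "real \<Rightarrow> real"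
  assumes H: "H1_deriv w g" and psim: "\<psi> \<in> borel_measurable borel"
    and lo: "\<And>x. phi x \<le> \<psi> x" and hi: "\<And>x. \<psi> x \<le> exp (- b * \<bar>x\<bar>) / sqrt 2"
    and b: "49/100 \<le> b"
    and orth: "(LINT x|lborel. w x * complex_of_real (\<psi> x)) = 0"
  shows "(cmod (w 0))\<^sup>2 \<le> L2_norm_sq g"
proof -
  have b0: "b > 0"
    using b by simp
  have psi0: "0 \<le> \<psi> x" for x
    using order_trans[OF phi_nonneg lo] .
  define Pp where "Pp = (LINT t:{0..}|lborel. (cmod (g t))\<^sup>2)"
  define Pm where "Pm = (LINT t:{..0}|lborel. (cmod (g t))\<^sup>2)"
  define I where "I = (LINT x|lborel. \<psi> x)"
  note mass = exp_abs_weight_integrable_mass[OF psim lo hi b0, folded I_def]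
  note incr = H1_deriv_weighted_increment_bound[OF H psim psi0 hi b0, folded Pp_def Pm_def]
  have "(LINT x|lborel. (w x - w 0) * complex_of_real (\<psi> x))
      = (LINT x|lborel. w x * complex_of_real (\<psi> x)) - w 0 * complex_of_real I"
  proof -
    have "integrable lborel (\<lambda>x. w 0 * complex_of_real (\<psi> x))"
      using mass(1) by simp
    moreover have "integrable lborel (\<lambda>x. w x * complex_of_real (\<psi> x))"
      using Bochner_Integration.integrable_add[OF incr(1) calculation] by (simp add: algebra_simps)
    ultimately show ?thesis
      by (simp add: I_def left_diff_distrib)
  qed
  then have "cmod (w 0) * I \<le> (sqrt Pp + sqrt Pm) / sqrt 2 * Gamma (3/2) / b powr (3/2)"
    using incr(2) order_trans[OF _ mass(2)] by (simp add: orth norm_mult)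
  then have "cmod (w 0) * (2 * sqrt 2) \<le> (sqrt Pp + sqrt Pm) / sqrt 2 * Gamma (3/2) / b powr (3/2)"
    using mass(2) by (meson mult_left_mono norm_ge_zero order_trans)
  moreover have "0 \<le> Pp" "0 \<le> Pm"
    by (auto simp: Pp_def Pm_def set_lebesgue_integral_def intro!: integral_nonneg_AE)
  ultimately have "(cmod (w 0))\<^sup>2 \<le> Pp + Pm"
    using Gamma_three_halves_estimate[OF b norm_ge_zero] by blast
  also have "\<dots> = L2_norm_sq g"
    using H by (simp add: Pp_def Pm_def H1_deriv_def L2_norm_sq_split)
  finally show ?thesis .
qed

lemma smooth_fun_continuous: "smooth_fun f \<Longrightarrow> continuous_on UNIV f"
  unfolding smooth_fun_def
  by (intro differentiable_imp_continuous_on differentiable_at_imp_differentiable_on)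
    (metis funpow_0)

lemma phi_div_zeta_bounds:
  assumes "0 \<le> ch x" and "ch x \<le> 1" and "A > 0"
  shows "phi x \<le> phi x / zeta ch A x"
    and "phi x / zeta ch A x \<le> exp (- (1/2 - 1/A) * \<bar>x\<bar>) / sqrt 2"
proof -
  have eq: "phi x / zeta ch A x = exp (- \<bar>x\<bar> / 2 + \<bar>x\<bar> / A * (1 - ch x)) / sqrt 2"
  proof -
    have "phi x / zeta ch A x = exp (- \<bar>x\<bar> / 2) / exp (- (\<bar>x\<bar> / A) * (1 - ch x)) / sqrt 2"
      by (simp add: phi_def zeta_def)
    also have "exp (- \<bar>x\<bar> / 2) / exp (- (\<bar>x\<bar> / A) * (1 - ch x)) = exp (- \<bar>x\<bar> / 2 + \<bar>x\<bar> / A * (1 - ch x))"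
      by (simp add: exp_diff [symmetric])
    finally show ?thesis .
  qed
  have "0 \<le> \<bar>x\<bar> / A * (1 - ch x)"
    using assms by simp
  then show "phi x \<le> phi x / zeta ch A x"
    unfolding eq by (simp add: phi_def divide_right_mono)
  have "\<bar>x\<bar> * (1 - ch x) \<le> \<bar>x\<bar>"
    using assms by (simp add: mult_left_le)
  then have "\<bar>x\<bar> / A * (1 - ch x) \<le> \<bar>x\<bar> / A"
    using assms by (simp add: divide_right_mono)
  then show "phi x / zeta ch A x \<le> exp (- (1/2 - 1/A) * \<bar>x\<bar>) / sqrt 2"
    unfolding eq by (intro divide_right_mono) (auto simp: algebra_simps)
qed

lemma zeta_mult_H1_value_at_zero_sq_le:
  assumes ch: "cutoff ch" and A: "100 \<le> A" and \<xi>: "L2c \<xi>"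
    and H: "H1_deriv (\<lambda>x. complex_of_real (zeta ch A x) * \<xi> x) w'"
  shows "(cmod (complex_of_real (zeta ch A 0) * \<xi> 0))\<^sup>2 \<le> L2_norm_sq w'"
proof -
  have ch01: "0 \<le> ch x" "ch x \<le> 1" for x
    using ch by (auto simp: cutoff_def)
  have [measurable]: "ch \<in> borel_measurable borel"
    using ch by (intro borel_measurable_continuous_onI smooth_fun_continuous) (simp add: cutoff_def)
  define \<psi> where "\<psi> x = phi x / zeta ch A x" for x
  have psim: "\<psi> \<in> borel_measurable borel"
    unfolding \<psi>_def[abs_def] zeta_def[abs_def] phi_def[abs_def] by measurable
  have "1/A \<le> 1/100"
    using A by (intro divide_left_mono) auto
  then have b: "49/100 \<le> 1/2 - 1/A"
    by simp
  have "(\<lambda>x. complex_of_real (zeta ch A x) * \<xi> x * complex_of_real (\<psi> x)) = (\<lambda>x. \<xi> x * complex_of_real (phi x))"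
    by (simp add: fun_eq_iff \<psi>_def zeta_def of_real_divide)
  then have orth: "(LINT x|lborel. complex_of_real (zeta ch A x) * \<xi> x * complex_of_real (\<psi> x)) = 0"
    using \<xi> by (simp add: L2c_def)
  show ?thesis
    using H1_deriv_value_at_zero_sq_le[OF H psim _ _ b orth] phi_div_zeta_bounds[of ch, OF ch01] A
    by (simp add: \<psi>_def)
qed

theorem claim2p5:
  fixes ch :: "real \<Rightarrow> real"
  assumes "cutoff ch"
  shows "\<exists>A0 > 1. \<exists>C0 > 0. \<forall>A \<ge> A0. \<forall>\<xi> w'.
           H1 \<xi> \<longrightarrow> L2c \<xi> \<longrightarrow>
           H1_deriv (\<lambda>x. complex_of_real (zeta ch A x) * \<xi> x) w' \<longrightarrow>
           L2_norm_sq w' - (cmod (complex_of_real (zeta ch A 0) * \<xi> 0))\<^sup>2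
             \<ge> - C0 / A\<^sup>2 * (L2_norm_sq w' + (cmod (complex_of_real (zeta ch A 0) * \<xi> 0))\<^sup>2)"
proof -
  have "L2_norm_sq w' - (cmod (complex_of_real (zeta ch A 0) * \<xi> 0))\<^sup>2
      \<ge> - 1 / A\<^sup>2 * (L2_norm_sq w' + (cmod (complex_of_real (zeta ch A 0) * \<xi> 0))\<^sup>2)"
    if "100 \<le> A" and "L2c \<xi>" and "H1_deriv (\<lambda>x. complex_of_real (zeta ch A x) * \<xi> x) w'"
    for A :: real and \<xi> w' :: "real \<Rightarrow> complex"
  proof -
    have "(cmod (complex_of_real (zeta ch A 0) * \<xi> 0))\<^sup>2 \<le> L2_norm_sq w'"
      using zeta_mult_H1_value_at_zero_sq_le[OF assms that] .
    moreover have "0 \<le> 1 / A\<^sup>2 * (L2_norm_sq w' + (cmod (complex_of_real (zeta ch A 0) * \<xi> 0))\<^sup>2)"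
      using calculation order_trans[OF zero_le_power2] by (intro mult_nonneg_nonneg add_nonneg_nonneg) auto
    ultimately show ?thesis
      by (simp only: minus_divide_left mult_minus_left)
  qed
  then show ?thesis
    by (intro exI[of _ "100::real"] exI[of _ "1::real"] conjI allI impI) simp_all
qed

end
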